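(* For the graph $G$ defined below and for every finite set $C$, there is no distinguishing $C$-colouring of the vertex set of $G$.
   Context: Let $\mathbb Q^+=\{q^+: q\in\mathbb Q\}$ and $\mathbb Q^-=\{q^-: q\in\mathbb Q\}$ be two disjoint copies of $\mathbb Q$. $G$ is the simple undirected graph with vertex set $V=\mathbb Q^+\cup\mathbb Q^-$ in which the edges are exactly the pairs $\{q^+,r^-\}$ with $q,r\in\mathbb Q$ and $q<r$ (there are no edges inside $\mathbb Q^+$ or inside $\mathbb Q^-$). A $C$-colouring of $V$ is a map $c\colon V\to C$; it is distinguishing if the only automorphism $\varphi$ of $G$ with $c(\varphi(v))=c(v)$ for all $v\in V$ is the identity. *)

theory Defs
  imports Main "HOL.Rat"
begin

text \<open>Vertices: (q, True) stands for q^+, (q, False) stands for q^-.\<close>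
type_synonym vertex = "rat \<times> bool"

definition G_edge :: "vertex \<Rightarrow> vertex \<Rightarrow> bool" where
  "G_edge u v \<longleftrightarrow>
     (\<exists>q r. q < r \<and> ((u = (q, True) \<and> v = (r, False)) \<or> (u = (r, False) \<and> v = (q, True))))"

definition G_aut :: "(vertex \<Rightarrow> vertex) \<Rightarrow> bool" where
  "G_aut \<phi> \<longleftrightarrow> bij \<phi> \<and> (\<forall>u v. G_edge (\<phi> u) (\<phi> v) \<longleftrightarrow> G_edge u v)"

definition distinguishing :: "(vertex \<Rightarrow> 'c) \<Rightarrow> bool" where
  "distinguishing c \<longleftrightarrow> (\<forall>\<phi>. G_aut \<phi> \<and> (\<forall>v. c (\<phi> v) = c v) \<longrightarrow> \<phi> = id)"

end

theory Submission
  imports Defs "HOL-Library.Countable"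
begin

text \<open>
  Colour each rational q by the pair of colours of q^+ and q^-. With finitely many colours
  there is an open interval in which every occurring colour is dense (shrink the interval
  while some colour of one of its points misses a subinterval; the number of colours
  drops each time). A back-and-forth argument inside such an interval yields a
  colour-preserving order automorphism of \<rat> that fixes everything outside the interval and
  moves one point. Applied to both copies of \<rat> at once it is a nontrivial
  colour-preserving automorphism of G, since the edges of G only depend on the order of \<rat>.
\<close>

definition colours_dense_in :: "('a::linorder \<Rightarrow> 'k) \<Rightarrow> 'a \<Rightarrow> 'a \<Rightarrow> bool" where
  "colours_dense_in c a b \<longleftrightarrow>
     (\<forall>x\<in>{a<..<b}. \<forall>u v. a \<le> u \<longrightarrow> u < v \<longrightarrow> v \<le> b \<longrightarrow> (\<exists>w\<in>{u<..<v}. c w = c x))"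

lemma exists_colours_dense_subinterval:
  fixes c :: "'a::linorder \<Rightarrow> 'k"
  assumes "finite (c ` {a<..<b})" and "a < b"
  shows "\<exists>a' b'. a \<le> a' \<and> a' < b' \<and> b' \<le> b \<and> colours_dense_in c a' b'"
  using assms
proof (induction "card (c ` {a<..<b})" arbitrary: a b rule: less_induct)
  case less
  show ?case
  proof (cases "colours_dense_in c a b")
    case True
    then show ?thesis using less.prems(2) by (meson order_refl)
  next
    case False
    then obtain x u v where x: "x \<in> {a<..<b}" and uv: "a \<le> u" "u < v" "v \<le> b"
      and missing: "\<And>w. w \<in> {u<..<v} \<Longrightarrow> c w \<noteq> c x"
      unfolding colours_dense_in_def by blast
    have "{u<..<v} \<subseteq> {a<..<b}"
      using uv by (auto intro: le_less_trans less_le_trans)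
    then have "c ` {u<..<v} \<subseteq> c ` {a<..<b} - {c x}"
      using missing by force
    moreover have "c x \<in> c ` {a<..<b}"
      using x by blast
    ultimately have fewer: "c ` {u<..<v} \<subset> c ` {a<..<b}"
      by blast
    then have fin: "finite (c ` {u<..<v})"
      by (rule finite_subset[OF psubset_imp_subset less.prems(1)])
    from fewer have "card (c ` {u<..<v}) < card (c ` {a<..<b})"
      by (rule psubset_card_mono[OF less.prems(1)])
    from less.hyps[OF this fin uv(2)] obtain a' b'
      where "u \<le> a'" "a' < b'" "b' \<le> v" "colours_dense_in c a' b'"
      by blast
    with uv show ?thesis
      by (meson order_trans)
  qed
qed

locale colours_dense_interval =
  fixes a b :: "'a::{linorder, countable}" and c :: "'a \<Rightarrow> 'k"
  assumes colours_dense: "colours_dense_in c a b"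
begin

definition iso_rel :: "('a \<times> 'a) set \<Rightarrow> bool" where
  "iso_rel R \<longleftrightarrow> R \<subseteq> {a<..<b} \<times> {a<..<b} \<and> (\<forall>x y. (x, y) \<in> R \<longrightarrow> c y = c x) \<and>
     (\<forall>x y x' y'. (x, y) \<in> R \<longrightarrow> (x', y') \<in> R \<longrightarrow> (x < x' \<longleftrightarrow> y < y'))"

definition partial_iso :: "('a \<times> 'a) set \<Rightarrow> bool" where
  "partial_iso P \<longleftrightarrow> finite P \<and> iso_rel P"

lemma iso_rel_converse: "iso_rel (R\<inverse>) \<longleftrightarrow> iso_rel R"
  unfolding iso_rel_def by auto

lemma partial_iso_converse: "partial_iso (P\<inverse>) \<longleftrightarrow> partial_iso P"
  by (simp add: partial_iso_def iso_rel_converse)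

lemma exists_colour_between:
  assumes "finite L" "finite U" "L \<subseteq> {a<..<b}" "U \<subseteq> {a<..<b}"
    and "\<forall>l\<in>L. \<forall>u\<in>U. l < u" and "x \<in> {a<..<b}"
  shows "\<exists>y\<in>{a<..<b}. c y = c x \<and> (\<forall>l\<in>L. l < y) \<and> (\<forall>u\<in>U. y < u)"
proof -
  define lo where "lo = Max (insert a L)"
  define hi where "hi = Min (insert b U)"
  have "a \<le> lo" "hi \<le> b" "lo < hi"
    using assms by (auto simp: lo_def hi_def)
  then obtain y where "y \<in> {lo<..<hi}" "c y = c x"
    using colours_dense assms(6) unfolding colours_dense_in_def by blast
  moreover have "l \<le> lo" if "l \<in> L" for l
    using that assms(1) by (simp add: lo_def)
  moreover have "hi \<le> u" if "u \<in> U" for u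
    using that assms(2) by (simp add: hi_def)
  ultimately show ?thesis
    using \<open>a \<le> lo\<close> \<open>hi \<le> b\<close> by fastforce
qed

lemma iso_rel_insert:
  assumes "iso_rel P" "x \<in> {a<..<b}" "y \<in> {a<..<b}" "c y = c x"
    and "\<And>x' y'. (x', y') \<in> P \<Longrightarrow> (x' < x \<longleftrightarrow> y' < y) \<and> (x < x' \<longleftrightarrow> y < y')"
  shows "iso_rel (insert (x, y) P)"
  using assms unfolding iso_rel_def by (simp add: less_irrefl)

lemma iso_rel_Image_less:
  assumes "iso_rel P" "l \<in> P `` {..<x}" "u \<in> P `` {x<..}"
  shows "l < u"
proof -
  obtain x1 x2 where "x1 < x" "(x1, l) \<in> P" "x < x2" "(x2, u) \<in> P"
    using assms(2,3) by auto
  moreover from this have "x1 < x2"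
    by (meson less_trans)
  ultimately show ?thesis
    using assms(1) unfolding iso_rel_def by blast
qed

lemma partial_iso_extend_Domain:
  assumes P: "partial_iso P" and x: "x \<in> {a<..<b}"
  shows "\<exists>y. partial_iso (insert (x, y) P)"
proof (cases "x \<in> Domain P")
  case True
  then show ?thesis using P by (metis Domain.cases insert_absorb)
next
  case False
  have "finite P" and iso: "iso_rel P"
    using P by (simp_all add: partial_iso_def)
  have "P `` {..<x} \<subseteq> {a<..<b}" "P `` {x<..} \<subseteq> {a<..<b}"
    using iso unfolding iso_rel_def by blast+
  moreover have "\<forall>l\<in>P `` {..<x}. \<forall>u\<in>P `` {x<..}. l < u"
    using iso_rel_Image_less[OF iso] by blast
  ultimately have "\<exists>y\<in>{a<..<b}. c y = c x \<and> (\<forall>l\<in>P `` {..<x}. l < y) \<and> (\<forall>u\<in>P `` {x<..}. y < u)"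
    using \<open>finite P\<close> by (intro exists_colour_between[OF _ _ _ _ _ x]) simp_all
  then obtain y where y: "y \<in> {a<..<b}" "c y = c x"
    and below: "\<forall>l\<in>P `` {..<x}. l < y" and above: "\<forall>u\<in>P `` {x<..}. y < u"
    by blast
  have "(x' < x \<longleftrightarrow> y' < y) \<and> (x < x' \<longleftrightarrow> y < y')" if "(x', y') \<in> P" for x' y'
  proof -
    have "x' \<noteq> x"
      using False that by blast
    then consider "x' < x" | "x < x'"
      by (meson neqE)
    then show ?thesis
    proof cases
      case 1
      then have "y' < y"
        using that below by blast
      then show ?thesis
        using 1 by (meson less_asym)
    next
      case 2
      then have "y < y'"
        using that above by blast
      then show ?thesis
        using 2 by (meson less_asym)
    qed
  qed
  then have "iso_rel (insert (x, y) P)"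
    using iso_rel_insert iso x y by blast
  then show ?thesis
    using \<open>finite P\<close> by (auto simp: partial_iso_def)
qed

lemma partial_iso_extend:
  assumes "partial_iso P"
  shows "\<exists>Q. partial_iso Q \<and> P \<subseteq> Q \<and> (x \<in> {a<..<b} \<longrightarrow> x \<in> Domain Q \<inter> Range Q)"
proof (cases "x \<in> {a<..<b}")
  case True
  then obtain y where "partial_iso (insert (x, y) P)"
    using partial_iso_extend_Domain assms by blast
  then obtain y' where "partial_iso (insert (x, y') ((insert (x, y) P)\<inverse>))"
    using partial_iso_extend_Domain True partial_iso_converse by blast
  moreover have "(insert (x, y') ((insert (x, y) P)\<inverse>))\<inverse> = insert (y', x) (insert (x, y) P)"
    by auto
  ultimately have "partial_iso (insert (y', x) (insert (x, y) P))"
    by (metis partial_iso_converse)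
  then show ?thesis
    by (intro exI[of _ "insert (y', x) (insert (x, y) P)"]) auto
qed (use assms in blast)

lemma iso_rel_UN_mono:
  fixes P :: "nat \<Rightarrow> ('a \<times> 'a) set"
  assumes "mono P" and iso: "\<And>n. iso_rel (P n)"
  shows "iso_rel (\<Union>n. P n)"
proof -
  have common: "\<exists>n. (x, y) \<in> P n \<and> (x', y') \<in> P n"
    if "(x, y) \<in> (\<Union>n. P n)" "(x', y') \<in> (\<Union>n. P n)" for x y x' y'
  proof -
    from that obtain m n where "(x, y) \<in> P m" "(x', y') \<in> P n"
      by blast
    moreover have "P m \<subseteq> P (max m n)" and "P n \<subseteq> P (max m n)"
      using \<open>mono P\<close> by (simp_all add: monoD)
    ultimately show ?thesis
      by blast
  qed
  have "(\<Union>n. P n) \<subseteq> {a<..<b} \<times> {a<..<b}" "\<forall>x y. (x, y) \<in> (\<Union>n. P n) \<longrightarrow> c y = c x"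
    using iso unfolding iso_rel_def by blast+
  moreover have "x < x' \<longleftrightarrow> y < y'"
    if "(x, y) \<in> (\<Union>n. P n)" "(x', y') \<in> (\<Union>n. P n)" for x y x' y'
    using common[OF that] iso unfolding iso_rel_def by blast
  ultimately show ?thesis
    unfolding iso_rel_def by blast
qed

lemma iso_rel_functional:
  assumes "iso_rel R" "(x, y) \<in> R" "(x, y') \<in> R"
  shows "y = y'"
proof -
  have "\<not> y < y'" "\<not> y' < y"
    using assms unfolding iso_rel_def by blast+
  then show ?thesis
    by simp
qed

lemma iso_rel_imp_automorphism:
  assumes iso: "iso_rel R" and "{a<..<b} \<subseteq> Domain R" "{a<..<b} \<subseteq> Range R"
  shows "\<exists>F. strict_mono F \<and> surj F \<and> (\<forall>x. c (F x) = c x) \<and> (\<forall>x y. (x, y) \<in> R \<longrightarrow> F x = y)"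
proof -
  define F where "F x = (if x \<in> {a<..<b} then THE y. (x, y) \<in> R else x)" for x
  have R_sub: "R \<subseteq> {a<..<b} \<times> {a<..<b}"
    using iso unfolding iso_rel_def by blast
  have F_R: "F x = y" if "(x, y) \<in> R" for x y
  proof -
    have "x \<in> {a<..<b}"
      using that R_sub by blast
    then show ?thesis
      unfolding F_def using that iso_rel_functional[OF iso] by (simp add: the_equality)
  qed
  have F_in: "(x, F x) \<in> R" if "x \<in> {a<..<b}" for x
    using that assms(2) F_R by blast
  have F_out: "F x = x" if "x \<notin> {a<..<b}" for x
    using that by (auto simp: F_def)
  have "F x < F y" if "x < y" for x y
  proof (cases "x \<in> {a<..<b}"; cases "y \<in> {a<..<b}")
    assume "x \<in> {a<..<b}" "y \<in> {a<..<b}"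
    then show ?thesis
      using F_in iso \<open>x < y\<close> unfolding iso_rel_def by blast
  next
    assume "x \<in> {a<..<b}" "y \<notin> {a<..<b}"
    then have "F x < b" "b \<le> y"
      using F_in[of x] R_sub \<open>x < y\<close> by auto
    then show ?thesis
      using F_out \<open>y \<notin> {a<..<b}\<close> by simp
  next
    assume "x \<notin> {a<..<b}" "y \<in> {a<..<b}"
    then have "x \<le> a" "a < F y"
      using F_in[of y] R_sub \<open>x < y\<close> by auto
    then show ?thesis
      using F_out \<open>x \<notin> {a<..<b}\<close> by simp
  next
    assume "x \<notin> {a<..<b}" "y \<notin> {a<..<b}"
    then show ?thesis
      using F_out \<open>x < y\<close> by simp
  qed
  then have "strict_mono F"
    by (rule strict_monoI)
  have "\<exists>x. y = F x" for y
  proof (cases "y \<in> {a<..<b}")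
    case True
    then obtain x where "(x, y) \<in> R"
      using assms(3) by blast
    then show ?thesis
      using F_R by metis
  next
    case False
    then show ?thesis
      using F_out by metis
  qed
  then have "surj F"
    by (simp add: surj_def)
  moreover have "c (F x) = c x" for x
  proof (cases "x \<in> {a<..<b}")
    case True
    then show ?thesis
      using F_in iso unfolding iso_rel_def by blast
  qed (simp add: F_out)
  ultimately show ?thesis
    using \<open>strict_mono F\<close> F_R by blast
qed

theorem exists_automorphism_mapping:
  assumes "p \<in> {a<..<b}" "q \<in> {a<..<b}" "c p = c q"
  shows "\<exists>F. strict_mono F \<and> surj F \<and> F p = q \<and> (\<forall>x. c (F x) = c x)"
proof -
  define good where "good Q \<longleftrightarrow> partial_iso Q \<and> (p, q) \<in> Q" for Q :: "('a \<times> 'a) set"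
  define extends where "extends n Q Q' \<longleftrightarrow> Q \<subseteq> Q' \<and>
    (from_nat n \<in> {a<..<b} \<longrightarrow> from_nat n \<in> Domain Q' \<inter> Range Q')"
    for n :: nat and Q Q' :: "('a \<times> 'a) set"
  have "good {(p, q)}"
    using assms unfolding good_def partial_iso_def iso_rel_def by auto
  moreover have "\<exists>Q'. good Q' \<and> extends n Q Q'" if "good Q" for n Q
    using that partial_iso_extend[of Q "from_nat n"] unfolding good_def extends_def by blast
  ultimately obtain P where P: "\<And>n. good (P n) \<and> extends n (P n) (P (Suc n))"
    using dependent_nat_choice[of "\<lambda>_. good" extends] by blast
  define R where "R = (\<Union>n. P n)"
  have "mono P"
    using P unfolding mono_iff_le_Suc extends_def by blast
  then have "iso_rel R"
    unfolding R_def using P iso_rel_UN_mono unfolding good_def partial_iso_def by blast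
  moreover have "x \<in> Domain R \<inter> Range R" if "x \<in> {a<..<b}" for x
  proof -
    have "x \<in> Domain (P (Suc (to_nat x))) \<inter> Range (P (Suc (to_nat x)))"
      using P[of "to_nat x"] that unfolding extends_def by simp
    then show ?thesis
      unfolding R_def by blast
  qed
  ultimately obtain F where "strict_mono F" "surj F" "\<forall>x. c (F x) = c x"
      "\<forall>x y. (x, y) \<in> R \<longrightarrow> F x = y"
    using iso_rel_imp_automorphism by blast
  moreover have "(p, q) \<in> R"
    using P unfolding R_def good_def by blast
  ultimately show ?thesis
    by blast
qed

end

lemma G_edge_iff:
  "G_edge u v \<longleftrightarrow> (snd u \<and> \<not> snd v \<and> fst u < fst v) \<or> (\<not> snd u \<and> snd v \<and> fst v < fst u)"
  by (cases u; cases v) (auto simp: G_edge_def)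

lemma G_aut_map_prod:
  assumes "strict_mono F" "surj F"
  shows "G_aut (map_prod F id)"
proof -
  have "bij (map_prod F id)"
    using assms map_prod_inj_on[of F UNIV id UNIV] map_prod_surj[of F id]
    by (simp add: bij_def strict_mono_imp_inj_on)
  moreover have "G_edge (map_prod F id u) (map_prod F id v) \<longleftrightarrow> G_edge u v" for u v
    using strict_mono_less[OF assms(1)] by (simp add: G_edge_iff map_prod_def split_beta)
  ultimately show ?thesis
    unfolding G_aut_def by blast
qed

theorem exists_nontrivial_colour_preserving_automorphism:
  fixes c :: "'a::{dense_linorder, no_top, countable} \<Rightarrow> 'k"
  assumes "finite (range c)"
  shows "\<exists>F p. strict_mono F \<and> surj F \<and> F p \<noteq> p \<and> (\<forall>x. c (F x) = c x)"
proof -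
  obtain a0 b0 :: 'a where "a0 < b0"
    using gt_ex by blast
  moreover have "finite (c ` {a0<..<b0})"
    using assms by (rule finite_subset[rotated]) blast
  ultimately obtain a b where "a < b" and dense_colours: "colours_dense_in c a b"
    using exists_colours_dense_subinterval by blast
  then interpret colours_dense_interval a b c
    by unfold_locales
  obtain p where p: "a < p" "p < b"
    using \<open>a < b\<close> dense by blast
  then obtain q where q: "p < q" "q < b" "c q = c p"
    using dense_colours[unfolded colours_dense_in_def, rule_format, of p p b] by (auto simp: less_imp_le)
  moreover have "a < q"
    using p q by (meson less_trans)
  ultimately obtain F where "strict_mono F" "surj F" "F p = q" "\<forall>x. c (F x) = c x"
    using exists_automorphism_mapping[of p q] p by auto
  then show ?thesis
    using q(1) by (metis less_irrefl)
qed

theorem mainTheorem4: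
  fixes C :: "'c set"
  assumes "finite C"
  shows "\<not> (\<exists>c :: vertex \<Rightarrow> 'c. (\<forall>v. c v \<in> C) \<and> distinguishing c)"
proof
  assume "\<exists>c :: vertex \<Rightarrow> 'c. (\<forall>v. c v \<in> C) \<and> distinguishing c"
  then obtain c :: "vertex \<Rightarrow> 'c" where "\<forall>v. c v \<in> C" and dist: "distinguishing c"
    by blast
  define c' where "c' q = (c (q, True), c (q, False))" for q
  have "range c' \<subseteq> C \<times> C"
    using \<open>\<forall>v. c v \<in> C\<close> by (auto simp: c'_def)
  then have "finite (range c')"
    using assms finite_subset by blast
  then obtain F p where F: "strict_mono F" "surj F" "F p \<noteq> p" "\<forall>x. c' (F x) = c' x"
    using exists_nontrivial_colour_preserving_automorphism by blast
  define \<phi> :: "vertex \<Rightarrow> vertex" where "\<phi> = map_prod F id"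
  have "c (\<phi> (x, s)) = c (x, s)" for x s
    using F(4) by (cases s) (simp_all add: \<phi>_def c'_def)
  then have "\<phi> = id"
    using dist G_aut_map_prod[OF F(1,2)] unfolding distinguishing_def \<phi>_def
    by (simp add: split_paired_All)
  moreover have "\<phi> (p, True) \<noteq> (p, True)"
    using F(3) by (simp add: \<phi>_def)
  ultimately show False
    by simp
qed

end
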